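(* Let $g\ge 1$. The complex free-nilpotent Lie algebra $N(2,g)$ of nilpotency class $2$ on $g$ generators admits a periodic derivation if and only if $g\le 3$.
   Context: $N(c,g)$ denotes the free-nilpotent complex Lie algebra of nilpotency class $c$ on $g$ generators (the free Lie algebra on $g$ generators modulo the $(c+1)$-st term of its lower central series). A derivation $D$ of a Lie algebra is called periodic if there is an integer $m\ge 1$ with $D^m=\mathrm{id}$. *)

theory Defs
  imports Complex_Main
begin

text \<open>Concrete model of the complex free-nilpotent Lie algebra N(2,g) of class 2 on g
generators: N(2,g) = V \<oplus> \<Lambda>^2 V with V = C^g, bracket [(v,a),(w,b)] = (0, v \<and> w).
An element is a pair (v, a) with v a vector indexed by {0..<g} and a an antisymmetric
g x g matrix (the coordinates of an element of \<Lambda>^2 V w.r.t. e_i \<and> e_j, i<j).\<close>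

type_synonym n2el = "(nat \<Rightarrow> complex) \<times> (nat \<Rightarrow> nat \<Rightarrow> complex)"

definition N2_carrier :: "nat \<Rightarrow> n2el set" where
  "N2_carrier g = {(v, a). (\<forall>i. g \<le> i \<longrightarrow> v i = 0) \<and>
                           (\<forall>i j. a i j = - a j i) \<and>
                           (\<forall>i j. g \<le> i \<longrightarrow> a i j = 0)}"

definition n2_add :: "n2el \<Rightarrow> n2el \<Rightarrow> n2el" where
  "n2_add x y = (\<lambda>i. fst x i + fst y i, \<lambda>i j. snd x i j + snd y i j)"

definition n2_smul :: "complex \<Rightarrow> n2el \<Rightarrow> n2el" where
  "n2_smul c x = (\<lambda>i. c * fst x i, \<lambda>i j. c * snd x i j)"

definition n2_bracket :: "n2el \<Rightarrow> n2el \<Rightarrow> n2el" where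
  "n2_bracket x y = (\<lambda>i. 0, \<lambda>i j. fst x i * fst y j - fst x j * fst y i)"

definition N2_derivation :: "nat \<Rightarrow> (n2el \<Rightarrow> n2el) \<Rightarrow> bool" where
  "N2_derivation g D \<longleftrightarrow>
     (\<forall>x\<in>N2_carrier g. D x \<in> N2_carrier g) \<and>
     (\<forall>x\<in>N2_carrier g. \<forall>y\<in>N2_carrier g. D (n2_add x y) = n2_add (D x) (D y)) \<and>
     (\<forall>c. \<forall>x\<in>N2_carrier g. D (n2_smul c x) = n2_smul c (D x)) \<and>
     (\<forall>x\<in>N2_carrier g. \<forall>y\<in>N2_carrier g.
        D (n2_bracket x y) = n2_add (n2_bracket (D x) y) (n2_bracket x (D y)))"

definition periodic_on :: "'a set \<Rightarrow> ('a \<Rightarrow> 'a) \<Rightarrow> bool" where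
  "periodic_on S D \<longleftrightarrow> (\<exists>m::nat. m \<ge> 1 \<and> (\<forall>x\<in>S. (D ^^ m) x = x))"

end

theory Submission
  imports Defs
begin

text \<open>For g \<le> 3 the diagonal derivation scaling e_i by \<omega>^i (\<omega> a primitive cube root of unity)
  is periodic. Conversely, for g \<ge> 2 a derivation D preserves the centre \<Lambda>^2 V, so if D^m = id
  its linear part L on V satisfies L^m = id and V is the direct sum of the eigenspaces of L, with
  m-th roots of unity as eigenvalues. For eigenvectors u, w of eigenvalues \<alpha>, \<gamma> with u \<and> w \<noteq> 0,
  u \<and> w is an eigenvector of D for \<alpha> + \<gamma>, so |\<alpha> + \<gamma>| = 1. Hence every eigenspace is a line
  (as |2\<alpha>| = 2) and distinct eigenvalues have sums of modulus 1; since no four unit complex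
  numbers have pairwise sums of modulus 1, there are at most three eigenvalues, so g \<le> 3.\<close>

text \<open>Not a simp rule: as a rewrite rule, the antisymmetry conjunct loops.\<close>
lemma mem_N2_carrier:
  "(v, a) \<in> N2_carrier g \<longleftrightarrow>
     (\<forall>i. g \<le> i \<longrightarrow> v i = 0) \<and> (\<forall>i j. a i j = - a j i) \<and> (\<forall>i j. g \<le> i \<longrightarrow> a i j = 0)"
  by (simp add: N2_carrier_def)

lemma N2_carrier_snd_eq_0:
  assumes "(v, a) \<in> N2_carrier g" and "\<not> (i < g \<and> j < g \<and> i \<noteq> j)"
  shows "a i j = 0"
proof -
  have anti: "a i j = - a j i" "a i i = - a i i" and zero: "\<forall>i j. g \<le> i \<longrightarrow> a i j = 0"
    using assms(1) unfolding mem_N2_carrier by blast+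
  consider "i = j" | "g \<le> i" | "g \<le> j" using assms(2) by linarith
  then show ?thesis
  proof cases
    case 1
    then show ?thesis using anti(2) by simp
  next
    case 2
    then show ?thesis using zero by blast
  next
    case 3
    then show ?thesis using zero anti(1) by simp
  qed
qed

definition Vspace :: "nat \<Rightarrow> (nat \<Rightarrow> complex) set" where
  "Vspace g = {v. \<forall>i. g \<le> i \<longrightarrow> v i = 0}"

lemma gen_in_N2_carrier_iff [simp]: "(u, \<lambda>i j. 0) \<in> N2_carrier g \<longleftrightarrow> u \<in> Vspace g"
  by (simp add: mem_N2_carrier Vspace_def)

definition wedge :: "(nat \<Rightarrow> complex) \<Rightarrow> (nat \<Rightarrow> complex) \<Rightarrow> nat \<Rightarrow> nat \<Rightarrow> complex" where
  "wedge u w = (\<lambda>i j. u i * w j - u j * w i)"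

lemma n2_bracket_eq_wedge: "n2_bracket (u, a) (w, b) = (\<lambda>i. 0, wedge u w)"
  by (simp add: n2_bracket_def wedge_def)

lemma wedge_in_N2_carrier:
  "u \<in> Vspace g \<Longrightarrow> w \<in> Vspace g \<Longrightarrow> (\<lambda>i. 0, wedge u w) \<in> N2_carrier g"
  by (simp add: mem_N2_carrier Vspace_def wedge_def)

lemma wedge_eq_0_imp_parallel:
  assumes "wedge u w = (\<lambda>i j. 0)" and "u p \<noteq> 0"
  shows "w = (\<lambda>i. (w p / u p) * u i)"
proof
  fix i
  have "u p * w i = u i * w p" using fun_cong[OF fun_cong[OF assms(1)], of p i]
    by (simp add: wedge_def)
  then show "w i = w p / u p * u i" using assms(2) by (simp add: field_simps)
qed

context
  fixes g :: nat and D :: "n2el \<Rightarrow> n2el"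
  assumes D: "N2_derivation g D"
begin

lemma derivation_closed: "x \<in> N2_carrier g \<Longrightarrow> D x \<in> N2_carrier g"
  using D by (simp add: N2_derivation_def)

lemma derivation_add:
  "x \<in> N2_carrier g \<Longrightarrow> y \<in> N2_carrier g \<Longrightarrow> D (n2_add x y) = n2_add (D x) (D y)"
  using D by (simp add: N2_derivation_def)

lemma derivation_smul: "x \<in> N2_carrier g \<Longrightarrow> D (n2_smul c x) = n2_smul c (D x)"
  using D by (simp add: N2_derivation_def)

lemma derivation_bracket:
  "x \<in> N2_carrier g \<Longrightarrow> y \<in> N2_carrier g \<Longrightarrow>
     D (n2_bracket x y) = n2_add (n2_bracket (D x) y) (n2_bracket x (D y))"
  using D by (simp add: N2_derivation_def)

lemma derivation_zero: "D (\<lambda>i. 0, \<lambda>i j. 0) = (\<lambda>i. 0, \<lambda>i j. 0)"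
proof -
  have "D (\<lambda>i. 0, \<lambda>i j. 0) = D (n2_smul 0 (\<lambda>i. 0, \<lambda>i j. 0))" by (simp add: n2_smul_def)
  also have "\<dots> = n2_smul 0 (D (\<lambda>i. 0, \<lambda>i j. 0))" by (rule derivation_smul) (simp add: Vspace_def)
  finally show ?thesis by (simp add: n2_smul_def)
qed

lemma funpow_derivation_closed: "x \<in> N2_carrier g \<Longrightarrow> (D ^^ n) x \<in> N2_carrier g"
  by (induction n) (simp_all add: derivation_closed)

lemma funpow_derivation_eigen:
  assumes "x \<in> N2_carrier g" and "D x = n2_smul \<beta> x"
  shows "(D ^^ n) x = n2_smul (\<beta> ^ n) x"
proof (induction n)
  case 0
  then show ?case by (simp add: n2_smul_def)
next
  case (Suc n)
  have "(D ^^ Suc n) x = n2_smul (\<beta> ^ n) (D x)" using Suc assms(1) by (simp add: derivation_smul)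
  then show ?case using assms(2) by (simp add: n2_smul_def algebra_simps)
qed

text \<open>For central z, 0 = D [z, e_j] = [D z, e_j], whose (i, j)-coordinate is the i-th
  coordinate of D z; this needs a generator e_j with j \<noteq> i, whence g \<ge> 2.\<close>
lemma derivation_central:
  assumes g: "2 \<le> g" and z: "(\<lambda>i. 0, a) \<in> N2_carrier g"
  shows "fst (D (\<lambda>i. 0, a)) = (\<lambda>i. 0)"
proof
  fix i
  let ?z = "(\<lambda>i. 0::complex, a)"
  show "fst (D ?z) i = 0"
  proof (cases "g \<le> i")
    case True
    with derivation_closed[OF z] show ?thesis
      by (metis mem_N2_carrier prod.collapse)
  next
    case False
    define j where "j = (if i = 0 then 1 else (0::nat))"
    have j: "j < g" "j \<noteq> i" using g False by (auto simp: j_def)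
    let ?y = "(\<lambda>k. if k = j then 1 else 0::complex, \<lambda>k l. 0::complex)"
    have y: "?y \<in> N2_carrier g" using j by (simp add: mem_N2_carrier Vspace_def)
    have "(\<lambda>i. 0, \<lambda>i j. 0) = D (n2_bracket ?z ?y)"
      by (simp add: n2_bracket_def derivation_zero)
    also have "\<dots> = n2_add (n2_bracket (D ?z) ?y) (\<lambda>i. 0, \<lambda>i j. 0)"
      using derivation_bracket[OF z y] by (simp add: n2_bracket_def)
    finally have "snd (n2_add (n2_bracket (D ?z) ?y) (\<lambda>i. 0, \<lambda>i j. 0)) i j = 0"
      by (metis snd_conv)
    then show ?thesis using j by (simp add: n2_add_def n2_bracket_def)
  qed
qed

end

subsection \<open>Diagonal derivations\<close>

definition diag_der :: "(nat \<Rightarrow> complex) \<Rightarrow> n2el \<Rightarrow> n2el" where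
  "diag_der c x = (\<lambda>i. c i * fst x i, \<lambda>i j. (c i + c j) * snd x i j)"

lemma funpow_diag_der:
  "(diag_der c ^^ n) x = (\<lambda>i. c i ^ n * fst x i, \<lambda>i j. (c i + c j) ^ n * snd x i j)"
  by (induction n) (simp_all add: diag_der_def algebra_simps)

lemma N2_derivation_diag_der: "N2_derivation g (diag_der c)"
  unfolding N2_derivation_def
proof (intro conjI ballI allI)
  fix x assume x: "x \<in> N2_carrier g"
  obtain v a where xva: "x = (v, a)" by fastforce
  have v: "\<forall>i. g \<le> i \<longrightarrow> v i = 0" and a: "\<forall>i j. a i j = - a j i" "\<forall>i j. g \<le> i \<longrightarrow> a i j = 0"
    using x unfolding xva mem_N2_carrier by blast+
  have "\<forall>i j. (c i + c j) * a i j = - ((c j + c i) * a j i)"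
    using a(1) by (metis add.commute mult_minus_right)
  moreover have "\<forall>i. g \<le> i \<longrightarrow> c i * v i = 0" using v by simp
  moreover have "\<forall>i j. g \<le> i \<longrightarrow> (c i + c j) * a i j = 0" using a(2) by simp
  ultimately show "diag_der c x \<in> N2_carrier g"
    unfolding xva diag_der_def fst_conv snd_conv mem_N2_carrier by blast
next
  fix x y
  show "diag_der c (n2_add x y) = n2_add (diag_der c x) (diag_der c y)"
    by (simp add: diag_der_def n2_add_def fun_eq_iff distrib_left)
next
  fix a x
  show "diag_der c (n2_smul a x) = n2_smul a (diag_der c x)"
    by (simp add: diag_der_def n2_smul_def fun_eq_iff mult.left_commute)
next
  fix x y
  show "diag_der c (n2_bracket x y) = n2_add (n2_bracket (diag_der c x) y) (n2_bracket x (diag_der c y))"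
    by (simp add: diag_der_def n2_add_def n2_bracket_def fun_eq_iff ring_distribs mult_ac)
qed

lemma periodic_diag_der:
  assumes "1 \<le> m" and "\<And>i. i < g \<Longrightarrow> c i ^ m = 1"
    and "\<And>i j. i < g \<Longrightarrow> j < g \<Longrightarrow> i \<noteq> j \<Longrightarrow> (c i + c j) ^ m = 1"
  shows "periodic_on (N2_carrier g) (diag_der c)"
  unfolding periodic_on_def
proof (intro exI[of _ m] conjI ballI)
  fix x assume x: "x \<in> N2_carrier g"
  obtain v a where xva: "x = (v, a)" by fastforce
  have v: "\<forall>i. g \<le> i \<longrightarrow> v i = 0" using x unfolding xva mem_N2_carrier by blast
  have "c i ^ m * v i = v i" for i
    using assms(2)[of i] v by (cases "i < g") simp_all
  moreover have "(c i + c j) ^ m * a i j = a i j" for i j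
    using assms(3)[of i j] N2_carrier_snd_eq_0[of v a g i j] x
    by (cases "i < g \<and> j < g \<and> i \<noteq> j") (simp_all add: xva)
  ultimately show "(diag_der c ^^ m) x = x" by (simp add: funpow_diag_der xva fun_eq_iff)
qed (rule assms(1))

definition cube_root_unity :: complex where
  "cube_root_unity = Complex (-1/2) (sqrt 3 / 2)"

lemma cube_root_unity_eq: "cube_root_unity\<^sup>2 + cube_root_unity + 1 = 0"
  by (simp add: cube_root_unity_def complex_eq_iff power2_eq_square algebra_simps)

lemma cube_root_unity_pow_6: "cube_root_unity ^ 6 = 1"
proof -
  have "cube_root_unity ^ 3 - 1 = (cube_root_unity - 1) * (cube_root_unity\<^sup>2 + cube_root_unity + 1)"
    by (simp add: algebra_simps power2_eq_square power3_eq_cube)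
  then have "cube_root_unity ^ 3 = 1" using cube_root_unity_eq by simp
  then show ?thesis using power_mult[of cube_root_unity 3 2] by simp
qed

text \<open>For i \<noteq> j < 3 the sums \<omega>^i + \<omega>^j are -1, -\<omega> and -\<omega>^2, all sixth roots of unity.\<close>
lemma periodic_derivation_if_le_3:
  assumes "g \<le> 3"
  shows "\<exists>D. N2_derivation g D \<and> periodic_on (N2_carrier g) D"
proof (intro exI conjI)
  let ?\<omega> = cube_root_unity
  show "N2_derivation g (diag_der (\<lambda>i. ?\<omega> ^ i))" by (rule N2_derivation_diag_der)
  have sums: "1 + ?\<omega> = - ?\<omega>\<^sup>2" "1 + ?\<omega>\<^sup>2 = - ?\<omega>" "?\<omega> + ?\<omega>\<^sup>2 = -1"
    using cube_root_unity_eq by algebra+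
  have pow6: "(?\<omega> ^ i) ^ 6 = 1" for i
    by (metis cube_root_unity_pow_6 power_one mult.commute power_mult)
  show "periodic_on (N2_carrier g) (diag_der (\<lambda>i. ?\<omega> ^ i))"
  proof (rule periodic_diag_der)
    fix i j assume "i < g" "j < g" "i \<noteq> j"
    then have "i \<in> {0, 1, 2}" "j \<in> {0, 1, 2}" "i \<noteq> j" using assms by auto
    then show "(?\<omega> ^ i + ?\<omega> ^ j) ^ 6 = 1"
      using sums pow6[of 1] pow6[of 2] by (auto simp: add.commute)
  qed (use pow6 in auto)
qed

definition Vlinear :: "nat \<Rightarrow> ((nat \<Rightarrow> complex) \<Rightarrow> (nat \<Rightarrow> complex)) \<Rightarrow> bool" where
  "Vlinear g F \<longleftrightarrow> (\<forall>u\<in>Vspace g. F u \<in> Vspace g) \<and>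
     (\<forall>u\<in>Vspace g. \<forall>w\<in>Vspace g. F (\<lambda>i. u i + w i) = (\<lambda>i. F u i + F w i)) \<and>
     (\<forall>c. \<forall>u\<in>Vspace g. F (\<lambda>i. c * u i) = (\<lambda>i. c * F u i))"

lemma Vlinear_in: "Vlinear g F \<Longrightarrow> u \<in> Vspace g \<Longrightarrow> F u \<in> Vspace g"
  unfolding Vlinear_def by blast

lemma Vlinear_add:
  "Vlinear g F \<Longrightarrow> u \<in> Vspace g \<Longrightarrow> w \<in> Vspace g \<Longrightarrow> F (\<lambda>i. u i + w i) = (\<lambda>i. F u i + F w i)"
  unfolding Vlinear_def by blast

lemma Vlinear_smul: "Vlinear g F \<Longrightarrow> u \<in> Vspace g \<Longrightarrow> F (\<lambda>i. c * u i) = (\<lambda>i. c * F u i)"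
  unfolding Vlinear_def by blast

lemma Vlinear_sum:
  assumes F: "Vlinear g F" and J: "finite J" and f: "\<forall>j\<in>J. f j \<in> Vspace g"
  shows "(\<lambda>i. \<Sum>j\<in>J. c j * f j i) \<in> Vspace g \<and>
         F (\<lambda>i. \<Sum>j\<in>J. c j * f j i) = (\<lambda>i. \<Sum>j\<in>J. c j * F (f j) i)"
  using J f
proof (induction J rule: finite_induct)
  case empty
  have "F (\<lambda>i. 0 * 0) = (\<lambda>i. 0 * F (\<lambda>i. 0) i)"
    by (rule Vlinear_smul[OF F]) (simp add: Vspace_def)
  then show ?case by (simp add: Vspace_def)
next
  case (insert x J)
  let ?s = "\<lambda>i. \<Sum>j\<in>J. c j * f j i"
  have s: "?s \<in> Vspace g" "F ?s = (\<lambda>i. \<Sum>j\<in>J. c j * F (f j) i)" using insert by auto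
  have fx: "f x \<in> Vspace g" using insert by auto
  then have cfx: "(\<lambda>i. c x * f x i) \<in> Vspace g" by (simp add: Vspace_def)
  have "F (\<lambda>i. c x * f x i + ?s i) = (\<lambda>i. F (\<lambda>i. c x * f x i) i + F ?s i)"
    by (rule Vlinear_add[OF F cfx s(1)])
  also have "F (\<lambda>i. c x * f x i) = (\<lambda>i. c x * F (f x) i)" by (rule Vlinear_smul[OF F fx])
  finally show ?case using insert s cfx by (simp add: Vspace_def)
qed

lemma Vlinear_funpow: "Vlinear g F \<Longrightarrow> Vlinear g (F ^^ n)"
  by (induction n) (simp_all add: Vlinear_def)

lemma funpow_Vlinear_eigen:
  assumes F: "Vlinear g F" and x: "x \<in> Vspace g" and Fx: "F x = (\<lambda>i. c * x i)"
  shows "(F ^^ n) x = (\<lambda>i. c ^ n * x i)"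
proof (induction n)
  case (Suc n)
  then show ?case using Vlinear_smul[OF F x, of "c ^ n"] Fx by (simp add: algebra_simps)
qed simp

definition lin_part :: "(n2el \<Rightarrow> n2el) \<Rightarrow> (nat \<Rightarrow> complex) \<Rightarrow> (nat \<Rightarrow> complex)" where
  "lin_part D u = fst (D (u, \<lambda>i j. 0))"

context
  fixes g :: nat and D :: "n2el \<Rightarrow> n2el"
  assumes D: "N2_derivation g D"
begin

lemma Vlinear_lin_part: "Vlinear g (lin_part D)"
  unfolding Vlinear_def
proof (intro conjI ballI allI)
  fix u assume u: "u \<in> Vspace g"
  then have "D (u, \<lambda>i j. 0) \<in> N2_carrier g" by (simp add: derivation_closed[OF D])
  then show "lin_part D u \<in> Vspace g"
    unfolding lin_part_def Vspace_def by (cases "D (u, \<lambda>i j. 0)") (auto simp: N2_carrier_def)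
  fix c
  have "(\<lambda>i. c * u i, \<lambda>i j. 0) = n2_smul c (u, \<lambda>i j. 0)" by (simp add: n2_smul_def)
  then show "lin_part D (\<lambda>i. c * u i) = (\<lambda>i. c * lin_part D u i)"
    using derivation_smul[OF D, of "(u, \<lambda>i j. 0)" c] u by (simp add: lin_part_def n2_smul_def)
next
  fix u w assume "u \<in> Vspace g" "w \<in> Vspace g"
  moreover have "(\<lambda>i. u i + w i, \<lambda>i j. 0) = n2_add (u, \<lambda>i j. 0) (w, \<lambda>i j. 0)"
    by (simp add: n2_add_def)
  ultimately show "lin_part D (\<lambda>i. u i + w i) = (\<lambda>i. lin_part D u i + lin_part D w i)"
    using derivation_add[OF D, of "(u, \<lambda>i j. 0)" "(w, \<lambda>i j. 0)"]
    by (simp add: lin_part_def n2_add_def)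
qed

lemma fst_derivation:
  assumes g: "2 \<le> g" and x: "x \<in> N2_carrier g"
  shows "fst (D x) = lin_part D (fst x)"
proof -
  obtain u a where xua: "x = (u, a)" by fastforce
  have u: "(u, \<lambda>i j. 0) \<in> N2_carrier g" and z: "(\<lambda>i. 0, a) \<in> N2_carrier g"
    using x unfolding xua gen_in_N2_carrier_iff Vspace_def mem_N2_carrier by blast+
  have "x = n2_add (u, \<lambda>i j. 0) (\<lambda>i. 0, a)" by (simp add: xua n2_add_def)
  then have "D x = n2_add (D (u, \<lambda>i j. 0)) (D (\<lambda>i. 0, a))"
    using derivation_add[OF D u z] by simp
  then show ?thesis using derivation_central[OF D g z] by (simp add: n2_add_def lin_part_def xua)
qed

lemma fst_funpow_derivation:
  assumes g: "2 \<le> g" and x: "x \<in> N2_carrier g"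
  shows "fst ((D ^^ n) x) = (lin_part D ^^ n) (fst x)"
proof (induction n)
  case (Suc n)
  then show ?case
    using fst_derivation[OF g funpow_derivation_closed[OF D x, of n]] by simp
qed simp

lemma derivation_wedge_eigen:
  assumes u: "u \<in> Vspace g" and w: "w \<in> Vspace g"
    and Lu: "lin_part D u = (\<lambda>i. \<alpha> * u i)" and Lw: "lin_part D w = (\<lambda>i. \<gamma> * w i)"
  shows "D (\<lambda>i. 0, wedge u w) = n2_smul (\<alpha> + \<gamma>) (\<lambda>i. 0, wedge u w)"
proof -
  have "D (\<lambda>i. 0, wedge u w) = D (n2_bracket (u, \<lambda>i j. 0) (w, \<lambda>i j. 0))"
    by (simp add: n2_bracket_eq_wedge)
  also have "\<dots> = n2_add (n2_bracket (D (u, \<lambda>i j. 0)) (w, \<lambda>i j. 0))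
                          (n2_bracket (u, \<lambda>i j. 0) (D (w, \<lambda>i j. 0)))"
    using derivation_bracket[OF D] u w by simp
  also have "\<dots> = n2_smul (\<alpha> + \<gamma>) (\<lambda>i. 0, wedge u w)"
    using Lu Lw unfolding lin_part_def
    by (simp add: n2_bracket_def n2_add_def n2_smul_def wedge_def fun_eq_iff algebra_simps)
  finally show ?thesis .
qed

lemma periodic_eigen_sum_norm:
  assumes u: "u \<in> Vspace g" and w: "w \<in> Vspace g"
    and Lu: "lin_part D u = (\<lambda>i. \<alpha> * u i)" and Lw: "lin_part D w = (\<lambda>i. \<gamma> * w i)"
    and nz: "wedge u w i j \<noteq> 0"
    and m: "1 \<le> m" and per: "\<forall>x\<in>N2_carrier g. (D ^^ m) x = x"
  shows "norm (\<alpha> + \<gamma>) = 1"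
proof -
  have z: "(\<lambda>i. 0, wedge u w) \<in> N2_carrier g" by (rule wedge_in_N2_carrier[OF u w])
  have "n2_smul ((\<alpha> + \<gamma>) ^ m) (\<lambda>i. 0, wedge u w) = (\<lambda>i. 0, wedge u w)"
    using funpow_derivation_eigen[OF D z derivation_wedge_eigen[OF u w Lu Lw], of m] per z by simp
  then have "(\<alpha> + \<gamma>) ^ m * wedge u w i j = wedge u w i j"
    unfolding n2_smul_def by (metis snd_conv)
  then have "(\<alpha> + \<gamma>) ^ m = 1" using nz by simp
  then show ?thesis using power_eq_1_iff m by fastforce
qed

end

subsection \<open>Spectral projections of a linear map of finite order\<close>

definition unit_root :: "nat \<Rightarrow> complex" where
  "unit_root m = cis (2 * pi / real m)"

lemma unit_root_pow: "unit_root m ^ k = cis (2 * pi * real k / real m)"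
  by (simp add: unit_root_def DeMoivre mult_ac)

lemma unit_root_pow_self: "0 < m \<Longrightarrow> unit_root m ^ m = 1"
  by (simp add: unit_root_pow)

lemma unit_root_pow_inj:
  "0 < m \<Longrightarrow> k < m \<Longrightarrow> l < m \<Longrightarrow> unit_root m ^ k = unit_root m ^ l \<Longrightarrow> k = l"
  using bij_betw_roots_unity[of m] unfolding bij_betw_def inj_on_def unit_root_pow by auto

lemma norm_unit_root [simp]: "norm (unit_root m) = 1"
  by (simp add: unit_root_def)

lemma unit_root_nonzero [simp]: "unit_root m \<noteq> 0"
  using norm_unit_root[of m] by (metis norm_zero zero_neq_one)

lemma sum_shift_cyclic:
  fixes h :: "nat \<Rightarrow> 'a :: cancel_comm_monoid_add"
  assumes "h m = h 0"
  shows "(\<Sum>j<m. h (Suc j)) = (\<Sum>j<m. h j)"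
proof -
  have "h 0 + (\<Sum>j<m. h (Suc j)) = (\<Sum>j<Suc m. h j)" by (rule sum.lessThan_Suc_shift[symmetric])
  also have "\<dots> = h 0 + (\<Sum>j<m. h j)" using assms by (simp add: add.commute)
  finally show ?thesis by simp
qed

text \<open>The projection onto the eigenspace of L for the eigenvalue \<zeta>^k, \<zeta> = unit_root m,
  given by the discrete Fourier transform of the orbit of v.\<close>
definition eig_proj ::
  "((nat \<Rightarrow> complex) \<Rightarrow> (nat \<Rightarrow> complex)) \<Rightarrow> nat \<Rightarrow> nat \<Rightarrow> (nat \<Rightarrow> complex) \<Rightarrow> (nat \<Rightarrow> complex)"
where
  "eig_proj L m k v = (\<lambda>i. \<Sum>j<m. (inverse (unit_root m) ^ (k * j) / of_nat m) * (L ^^ j) v i)"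

context
  fixes g m :: nat and L :: "(nat \<Rightarrow> complex) \<Rightarrow> (nat \<Rightarrow> complex)"
  assumes lin: "Vlinear g L" and m: "1 \<le> m" and per: "\<forall>u\<in>Vspace g. (L ^^ m) u = u"
begin

lemma eig_proj_in_Vspace: "v \<in> Vspace g \<Longrightarrow> eig_proj L m k v \<in> Vspace g"
  unfolding eig_proj_def
  using Vlinear_sum[OF Vlinear_funpow[OF lin], of "{..<m}"] Vlinear_in[OF Vlinear_funpow[OF lin]]
  by (simp add: Vspace_def)

lemma Vlinear_eig_proj: "Vlinear g (eig_proj L m k)"
  unfolding Vlinear_def
proof (intro conjI ballI allI)
  fix u assume u: "u \<in> Vspace g"
  then show "eig_proj L m k u \<in> Vspace g" by (rule eig_proj_in_Vspace)
  fix c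
  show "eig_proj L m k (\<lambda>i. c * u i) = (\<lambda>i. c * eig_proj L m k u i)"
    unfolding eig_proj_def using Vlinear_smul[OF Vlinear_funpow[OF lin] u]
    by (simp add: sum_distrib_left algebra_simps)
next
  fix u w assume "u \<in> Vspace g" "w \<in> Vspace g"
  then show "eig_proj L m k (\<lambda>i. u i + w i) = (\<lambda>i. eig_proj L m k u i + eig_proj L m k w i)"
    unfolding eig_proj_def using Vlinear_add[OF Vlinear_funpow[OF lin]]
    by (simp add: sum.distrib[symmetric] algebra_simps)
qed

lemma eig_proj_eigen:
  assumes v: "v \<in> Vspace g"
  shows "L (eig_proj L m k v) = (\<lambda>i. unit_root m ^ k * eig_proj L m k v i)"
proof
  fix i
  let ?\<zeta> = "unit_root m"
  define h where "h j = inverse ?\<zeta> ^ (k * j) * (L ^^ j) v i" for j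
  have orbit: "\<forall>j\<in>{..<m}. (L ^^ j) v \<in> Vspace g"
    using Vlinear_in[OF Vlinear_funpow[OF lin] v] by blast
  have "h m = h 0"
    using unit_root_pow_self[of m] m per v
    by (simp add: h_def power_mult mult.commute[of k] power_inverse)
  then have cyclic: "(\<Sum>j<m. h (Suc j)) = (\<Sum>j<m. h j)" by (rule sum_shift_cyclic)
  have "L (eig_proj L m k v) i = (\<Sum>j<m. inverse ?\<zeta> ^ (k * j) / of_nat m * L ((L ^^ j) v) i)"
    unfolding eig_proj_def using Vlinear_sum[OF lin _ orbit, of "\<lambda>j. inverse ?\<zeta> ^ (k * j) / of_nat m"]
    by simp
  also have "\<dots> = (\<Sum>j<m. ?\<zeta> ^ k * h (Suc j) / of_nat m)"
    by (intro sum.cong refl) (simp add: h_def power_add field_simps power_inverse)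
  also have "\<dots> = ?\<zeta> ^ k * (\<Sum>j<m. h j) / of_nat m"
    by (simp add: cyclic flip: sum_divide_distrib sum_distrib_left)
  also have "\<dots> = ?\<zeta> ^ k * eig_proj L m k v i"
    by (simp add: eig_proj_def h_def sum_divide_distrib sum_distrib_left mult_ac)
  finally show "L (eig_proj L m k v) i = ?\<zeta> ^ k * eig_proj L m k v i" .
qed

lemma eig_proj_fixed:
  assumes x: "x \<in> Vspace g" and Lx: "L x = (\<lambda>i. unit_root m ^ k * x i)"
  shows "eig_proj L m k x = x"
proof
  fix i
  have "inverse (unit_root m) ^ (k * j) * (unit_root m ^ k) ^ j = 1" for j
    by (simp add: power_mult[symmetric] field_simps)
  then have "eig_proj L m k x i = (\<Sum>j<m. x i / of_nat m)"
    unfolding eig_proj_def funpow_Vlinear_eigen[OF lin x Lx]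
    by (intro sum.cong refl) (metis mult.assoc mult.commute mult.left_neutral times_divide_eq_left)
  also have "\<dots> = x i" using m by simp
  finally show "eig_proj L m k x i = x i" .
qed

lemma sum_eig_proj:
  assumes v: "v \<in> Vspace g"
  shows "(\<Sum>k<m. eig_proj L m k v i) = v i"
proof -
  have geometric: "(\<Sum>k<m. inverse (unit_root m) ^ (k * j)) = 0" if j: "0 < j" "j < m" for j
  proof -
    let ?x = "inverse (unit_root m ^ j)"
    have "(unit_root m ^ j) ^ m = (unit_root m ^ m) ^ j" by (simp add: mult.commute flip: power_mult)
    then have "?x ^ m = 1" using unit_root_pow_self[of m] m by (simp add: power_inverse)
    moreover have "?x \<noteq> 1" using unit_root_pow_inj[of m j 0] j by auto
    ultimately have "(\<Sum>k<m. ?x ^ k) = 0" by (simp add: sum_gp_strict)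
    then show ?thesis by (simp add: power_inverse mult.commute[of _ j] power_mult)
  qed
  have "(\<Sum>k<m. eig_proj L m k v i)
        = (\<Sum>j<m. (\<Sum>k<m. inverse (unit_root m) ^ (k * j)) * (L ^^ j) v i / of_nat m)"
    unfolding eig_proj_def by (subst sum.swap) (simp add: sum_distrib_right sum_divide_distrib)
  also have "\<dots> = (\<Sum>j\<in>{0}. (\<Sum>k<m. inverse (unit_root m) ^ (k * j)) * (L ^^ j) v i / of_nat m)"
    by (rule sum.mono_neutral_right) (use m geometric in auto)
  also have "\<dots> = v i" using m by simp
  finally show ?thesis .
qed

end

subsection \<open>Counting eigenvalues\<close>

text \<open>Expanding, |a+b+c+d|^2 = \<Sigma>|x+y|^2 - 2 \<Sigma>|x|^2 over the six pairs and four points,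
  which would be 6 - 8 < 0.\<close>
lemma no_four_units_with_unit_pair_sums:
  fixes a b c d :: complex
  assumes "norm a = 1" "norm b = 1" "norm c = 1" "norm d = 1"
    "norm (a + b) = 1" "norm (a + c) = 1" "norm (a + d) = 1"
    "norm (b + c) = 1" "norm (b + d) = 1" "norm (c + d) = 1"
  shows False
proof -
  have sq: "(Re z)\<^sup>2 + (Im z)\<^sup>2 = 1" if "norm z = 1" for z :: complex
    using that by (metis cmod_power2 power_one)
  have "0 \<le> (Re (a + b + c + d))\<^sup>2 + (Im (a + b + c + d))\<^sup>2" by simp
  also have "\<dots> = ((Re (a + b))\<^sup>2 + (Im (a + b))\<^sup>2) + ((Re (a + c))\<^sup>2 + (Im (a + c))\<^sup>2)
      + ((Re (a + d))\<^sup>2 + (Im (a + d))\<^sup>2) + ((Re (b + c))\<^sup>2 + (Im (b + c))\<^sup>2)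
      + ((Re (b + d))\<^sup>2 + (Im (b + d))\<^sup>2) + ((Re (c + d))\<^sup>2 + (Im (c + d))\<^sup>2)
      - 2 * (((Re a)\<^sup>2 + (Im a)\<^sup>2) + ((Re b)\<^sup>2 + (Im b)\<^sup>2) + ((Re c)\<^sup>2 + (Im c)\<^sup>2)
             + ((Re d)\<^sup>2 + (Im d)\<^sup>2))"
    by simp algebra
  also have "\<dots> = -2" by (simp only: sq assms) simp
  finally show False by simp
qed

lemma card_le_3_if_unit_pair_sums:
  fixes z :: "'a \<Rightarrow> complex"
  assumes "\<And>x. x \<in> S \<Longrightarrow> norm (z x) = 1"
    and "\<And>x y. x \<in> S \<Longrightarrow> y \<in> S \<Longrightarrow> x \<noteq> y \<Longrightarrow> norm (z x + z y) = 1"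
  shows "card S \<le> 3"
proof (rule ccontr)
  assume "\<not> card S \<le> 3"
  then have "4 \<le> card S" by simp
  then have "\<exists>a b c d. a \<in> S \<and> b \<in> S \<and> c \<in> S \<and> d \<in> S \<and>
      a \<noteq> b \<and> a \<noteq> c \<and> a \<noteq> d \<and> b \<noteq> c \<and> b \<noteq> d \<and> c \<noteq> d"
    by (auto simp: numeral_eq_Suc card_le_Suc_iff)
  then show False
    using no_four_units_with_unit_pair_sums assms by metis
qed

definition basis_vec :: "nat \<Rightarrow> nat \<Rightarrow> complex" where
  "basis_vec t = (\<lambda>i. if i = t then 1 else 0)"

lemma basis_vec_in_Vspace: "t < g \<Longrightarrow> basis_vec t \<in> Vspace g"
  by (auto simp: basis_vec_def Vspace_def)

lemma Vspace_basis_expansion: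
  assumes "w \<in> Vspace g"
  shows "w = (\<lambda>i. \<Sum>t<g. w t * basis_vec t i)"
proof
  fix i
  have "(\<Sum>t<g. w t * basis_vec t i) = (if i < g then w i else 0)"
    by (simp add: basis_vec_def if_distrib cong: if_cong)
  also have "\<dots> = w i" using assms by (auto simp: Vspace_def)
  finally show "w i = (\<Sum>t<g. w t * basis_vec t i)" by simp
qed

definition eig_support :: "((nat \<Rightarrow> complex) \<Rightarrow> (nat \<Rightarrow> complex)) \<Rightarrow> nat \<Rightarrow> nat \<Rightarrow> nat set" where
  "eig_support L m g = {k. k < m \<and> (\<exists>v\<in>Vspace g. eig_proj L m k v \<noteq> (\<lambda>i. 0))}"

definition eig_proj_trace ::
  "((nat \<Rightarrow> complex) \<Rightarrow> (nat \<Rightarrow> complex)) \<Rightarrow> nat \<Rightarrow> nat \<Rightarrow> nat \<Rightarrow> complex" where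
  "eig_proj_trace L m g k = (\<Sum>t<g. eig_proj L m k (basis_vec t) t)"

context
  fixes g m :: nat and L :: "(nat \<Rightarrow> complex) \<Rightarrow> (nat \<Rightarrow> complex)"
  assumes lin: "Vlinear g L" and m: "1 \<le> m" and per: "\<forall>u\<in>Vspace g. (L ^^ m) u = u"
    and eigen_sum: "\<And>u w \<alpha> \<gamma> i j. u \<in> Vspace g \<Longrightarrow> w \<in> Vspace g \<Longrightarrow>
      L u = (\<lambda>i. \<alpha> * u i) \<Longrightarrow> L w = (\<lambda>i. \<gamma> * w i) \<Longrightarrow> wedge u w i j \<noteq> 0 \<Longrightarrow>
      norm (\<alpha> + \<gamma>) = 1"
begin

text \<open>Each eigenspace is a line, because |2\<zeta>^k| = 2.\<close>
lemma wedge_eig_proj_eq_0: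
  assumes "v \<in> Vspace g" "v' \<in> Vspace g"
  shows "wedge (eig_proj L m k v) (eig_proj L m k v') i j = 0"
proof (rule ccontr)
  assume "wedge (eig_proj L m k v) (eig_proj L m k v') i j \<noteq> 0"
  then have "norm (unit_root m ^ k + unit_root m ^ k) = 1"
    using eigen_sum eig_proj_in_Vspace[OF lin m per] eig_proj_eigen[OF lin m per] assms by blast
  moreover have "norm (unit_root m ^ k + unit_root m ^ k) = 2"
    by (simp add: norm_mult norm_power flip: mult_2)
  ultimately show False by simp
qed

lemma norm_eig_support_sum:
  assumes k: "k \<in> eig_support L m g" and l: "l \<in> eig_support L m g" and "k \<noteq> l"
  shows "norm (unit_root m ^ k + unit_root m ^ l) = 1"
proof -
  obtain v v' where v: "v \<in> Vspace g" and v': "v' \<in> Vspace g"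
    and x_nz: "eig_proj L m k v \<noteq> (\<lambda>i. 0)" and y_nz: "eig_proj L m l v' \<noteq> (\<lambda>i. 0)"
    using k l by (auto simp: eig_support_def)
  define x y where "x = eig_proj L m k v" and "y = eig_proj L m l v'"
  have xV: "x \<in> Vspace g" and yV: "y \<in> Vspace g"
    using eig_proj_in_Vspace[OF lin m per] v v' by (auto simp: x_def y_def)
  have Lx: "L x = (\<lambda>i. unit_root m ^ k * x i)" and Ly: "L y = (\<lambda>i. unit_root m ^ l * y i)"
    using eig_proj_eigen[OF lin m per] v v' by (auto simp: x_def y_def)
  have "wedge x y \<noteq> (\<lambda>i j. 0)"
  proof
    assume "wedge x y = (\<lambda>i j. 0)"
    obtain p where p: "x p \<noteq> 0" using x_nz by (auto simp: x_def)
    obtain q where q: "y q \<noteq> 0" using y_nz by (auto simp: y_def)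
    define c where "c = y p / x p"
    have y: "y = (\<lambda>i. c * x i)"
      unfolding c_def by (rule wedge_eq_0_imp_parallel) fact+
    then have "L y = (\<lambda>i. unit_root m ^ k * y i)"
      using Vlinear_smul[OF lin xV, of c] Lx by (simp add: algebra_simps)
    then have "unit_root m ^ k * y q = unit_root m ^ l * y q" using Ly by metis
    then have "unit_root m ^ k = unit_root m ^ l" using q by simp
    then show False
      using unit_root_pow_inj[of m k l] k l \<open>k \<noteq> l\<close> m by (auto simp: eig_support_def)
  qed
  then obtain i j where "wedge x y i j \<noteq> 0" by (meson ext)
  then show ?thesis using eigen_sum[OF xV yV Lx Ly] by blast
qed

lemma card_eig_support_le_3: "card (eig_support L m g) \<le> 3"
  by (rule card_le_3_if_unit_pair_sums[of _ "\<lambda>k. unit_root m ^ k"])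
     (simp_all add: norm_power norm_eig_support_sum)

lemma eig_proj_trace_eq_0:
  "k < m \<Longrightarrow> k \<notin> eig_support L m g \<Longrightarrow> eig_proj_trace L m g k = 0"
  unfolding eig_proj_trace_def eig_support_def
  using basis_vec_in_Vspace by (auto intro!: sum.neutral simp: fun_eq_iff)

text \<open>Tr P = 1 for a projection P of rank one: with w \<noteq> 0 in the image, P v \<and> w = 0 gives
  (P v)_i w_p = (P v)_p w_i.\<close>
lemma eig_proj_trace_eq_1:
  assumes k: "k \<in> eig_support L m g"
  shows "eig_proj_trace L m g k = 1"
proof -
  obtain u where u: "u \<in> Vspace g" and w_nz: "eig_proj L m k u \<noteq> (\<lambda>i. 0)"
    using k by (auto simp: eig_support_def)
  define w where "w = eig_proj L m k u"
  have wV: "w \<in> Vspace g" using eig_proj_in_Vspace[OF lin m per u] by (simp add: w_def)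
  obtain p where p: "w p \<noteq> 0" using w_nz by (auto simp: w_def)
  have "eig_proj L m k w = w"
    using eig_proj_fixed[OF lin m per wV] eig_proj_eigen[OF lin m per u] by (simp add: w_def)
  also have "eig_proj L m k w = (\<lambda>i. \<Sum>t<g. w t * eig_proj L m k (basis_vec t) i)"
    using Vspace_basis_expansion[OF wV] basis_vec_in_Vspace
      Vlinear_sum[OF Vlinear_eig_proj[OF lin m per], of "{..<g}" basis_vec w]
    by simp
  finally have w_p: "w p = (\<Sum>t<g. w t * eig_proj L m k (basis_vec t) p)" by metis
  have rank_one: "eig_proj L m k v i * w p = eig_proj L m k v p * w i" if "v \<in> Vspace g" for v i
    using wedge_eig_proj_eq_0[OF that u, of k i p] by (simp add: wedge_def w_def)
  have "eig_proj_trace L m g k * w p = (\<Sum>t<g. eig_proj L m k (basis_vec t) t * w p)"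
    by (simp add: eig_proj_trace_def sum_distrib_right)
  also have "\<dots> = (\<Sum>t<g. w t * eig_proj L m k (basis_vec t) p)"
  proof (rule sum.cong[OF refl])
    fix t assume "t \<in> {..<g}"
    then have "eig_proj L m k (basis_vec t) t * w p = eig_proj L m k (basis_vec t) p * w t"
      using rank_one basis_vec_in_Vspace by simp
    then show "eig_proj L m k (basis_vec t) t * w p = w t * eig_proj L m k (basis_vec t) p"
      by (simp add: mult.commute)
  qed
  also have "\<dots> = w p" by (rule w_p[symmetric])
  finally show ?thesis using p by simp
qed

lemma dim_eq_card_eig_support: "g = card (eig_support L m g)"
proof -
  have "of_nat g = (\<Sum>t<g. basis_vec t t)" by (simp add: basis_vec_def)
  also have "\<dots> = (\<Sum>t<g. \<Sum>k<m. eig_proj L m k (basis_vec t) t)"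
    using sum_eig_proj[OF lin m per] basis_vec_in_Vspace by simp
  also have "\<dots> = (\<Sum>k<m. eig_proj_trace L m g k)"
    unfolding eig_proj_trace_def by (rule sum.swap)
  also have "\<dots> = (\<Sum>k\<in>eig_support L m g. eig_proj_trace L m g k)"
    by (rule sum.mono_neutral_right) (auto simp: eig_support_def eig_proj_trace_eq_0)
  also have "\<dots> = of_nat (card (eig_support L m g))"
    by (simp add: eig_proj_trace_eq_1)
  finally show ?thesis by (simp only: of_nat_eq_iff)
qed

end

lemma periodic_derivation_imp_le_3:
  assumes D: "N2_derivation g D" and p: "periodic_on (N2_carrier g) D" and g: "2 \<le> g"
  shows "g \<le> 3"
proof -
  obtain m where m: "1 \<le> m" and per: "\<forall>x\<in>N2_carrier g. (D ^^ m) x = x"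
    using p unfolding periodic_on_def by blast
  have L_per: "\<forall>u\<in>Vspace g. (lin_part D ^^ m) u = u"
    using fst_funpow_derivation[OF D g, of _ m] per by (metis fst_conv gen_in_N2_carrier_iff)
  note L_spectrum = Vlinear_lin_part[OF D] m L_per periodic_eigen_sum_norm[OF D _ _ _ _ _ m per]
  have "g = card (eig_support (lin_part D) m g)" by (rule dim_eq_card_eig_support[OF L_spectrum])
  also have "\<dots> \<le> 3" by (rule card_eig_support_le_3[OF L_spectrum])
  finally show ?thesis .
qed

theorem proposition2p14:
  fixes g :: nat
  assumes "1 \<le> g"
  shows "(\<exists>D. N2_derivation g D \<and> periodic_on (N2_carrier g) D) \<longleftrightarrow> g \<le> 3"
  using periodic_derivation_imp_le_3 periodic_derivation_if_le_3
  by (cases "2 \<le> g") auto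

end
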